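(* Consider $n$ parallel roads (indexed by $i\in[n]$) shared by $m$ vehicle types (indexed by $j\in[m]$), vehicle type $j$ having demand $\bar f^j\ge0$. A feasible routing is $f=(f^j_i)$ with $f^j_i\ge0$ and $\sum_i f^j_i=\bar f^j$ for each $j$. Road $i$ has latency $\ell_i(f)=b_i+\sum_j a^j_i f^j_i$, where $b_i\ge 0$ and the latency of every road is strictly increasing in the flow of each vehicle type on it (i.e. $a^j_i>0$ for all $i,j$). The social cost is $J(f)=\sum_i\big(\sum_j f^j_i\big)\ell_i(f)$. Given tolls $\tau=(\tau^j_i)$, the cost experienced by type $j$ on road $i$ is $c^j_i(f)=\ell_i(f)+\tau^j_i$, and a feasible routing $f$ is an equilibrium if for every $j$ and every road $i$ with $f^j_i>0$ one has $c^j_i(f)\le c^j_{i'}(f)$ for all $i'\in[n]$. For a routing $f$, let $\mathcal N^f_j=\{i: f^j_i>0\}$, and let $G(f)$ be the bipartite graph on the roads and the vehicle types with an edge between road $i$ and type $j$ iff $f^j_i>0$. Let $f^*$ be a feasible routing minimizing $J$ such that $G(f^* )$ is acyclic. Let $\mu$ be a constant, and levy the tolls $$\tau^j_i(f^* )=\begin{cases}\mu-\ell_i(f^* ) & \text{if } i\in\mathcal N^{f^*}_j,\\ P & \text{otherwise.}\end{cases}$$ Then, for sufficiently large $P$, the only equilibrium under these tolls is $f^*$.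
   Context: Parallel-road network with multiple vehicle types, affine road latencies with type-dependent coefficients, social cost equal to total latency; tolls may be vehicle-type- and road-specific. The existence of a socially optimal routing $f^*$ with acyclic $G(f^* )$ is guaranteed for this model. *)

theory Defs
  imports Complex_Main
begin

text \<open>A routing is f :: nat => nat => real, with f i j the flow of type j on road i.\<close>

definition feasible :: "nat \<Rightarrow> nat \<Rightarrow> (nat \<Rightarrow> real) \<Rightarrow> (nat \<Rightarrow> nat \<Rightarrow> real) \<Rightarrow> bool" where
  "feasible n m d f \<longleftrightarrow>
     (\<forall>i<n. \<forall>j<m. f i j \<ge> 0) \<and> (\<forall>j<m. (\<Sum>i<n. f i j) = d j)"

definition latency :: "nat \<Rightarrow> (nat \<Rightarrow> nat \<Rightarrow> real) \<Rightarrow> (nat \<Rightarrow> real) \<Rightarrow> (nat \<Rightarrow> nat \<Rightarrow> real) \<Rightarrow> nat \<Rightarrow> real" where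
  "latency m a b f i = b i + (\<Sum>j<m. a i j * f i j)"

definition social_cost :: "nat \<Rightarrow> nat \<Rightarrow> (nat \<Rightarrow> nat \<Rightarrow> real) \<Rightarrow> (nat \<Rightarrow> real) \<Rightarrow> (nat \<Rightarrow> nat \<Rightarrow> real) \<Rightarrow> real" where
  "social_cost n m a b f = (\<Sum>i<n. (\<Sum>j<m. f i j) * latency m a b f i)"

definition is_equilibrium ::
  "nat \<Rightarrow> nat \<Rightarrow> (nat \<Rightarrow> nat \<Rightarrow> real) \<Rightarrow> (nat \<Rightarrow> real) \<Rightarrow> (nat \<Rightarrow> real)
   \<Rightarrow> (nat \<Rightarrow> nat \<Rightarrow> real) \<Rightarrow> (nat \<Rightarrow> nat \<Rightarrow> real) \<Rightarrow> bool" where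
  "is_equilibrium n m a b d tau f \<longleftrightarrow> feasible n m d f \<and>
     (\<forall>j<m. \<forall>i<n. f i j > 0 \<longrightarrow>
        (\<forall>i'<n. latency m a b f i + tau i j \<le> latency m a b f i' + tau i' j))"

definition support_edge :: "nat \<Rightarrow> nat \<Rightarrow> (nat \<Rightarrow> nat \<Rightarrow> real) \<Rightarrow> nat + nat \<Rightarrow> nat + nat \<Rightarrow> bool" where
  "support_edge n m f u v \<longleftrightarrow>
     (\<exists>i j. i < n \<and> j < m \<and> f i j > 0 \<and>
        ((u = Inl i \<and> v = Inr j) \<or> (u = Inr j \<and> v = Inl i)))"

definition support_acyclic :: "nat \<Rightarrow> nat \<Rightarrow> (nat \<Rightarrow> nat \<Rightarrow> real) \<Rightarrow> bool" where
  "support_acyclic n m f \<longleftrightarrow>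
     \<not> (\<exists>vs. length vs \<ge> 3 \<and> distinct vs \<and>
           (\<forall>k. Suc k < length vs \<longrightarrow> support_edge n m f (vs ! k) (vs ! Suc k)) \<and>
           support_edge n m f (last vs) (hd vs))"

definition opt_tolls ::
  "nat \<Rightarrow> (nat \<Rightarrow> nat \<Rightarrow> real) \<Rightarrow> (nat \<Rightarrow> real) \<Rightarrow> (nat \<Rightarrow> nat \<Rightarrow> real) \<Rightarrow> real \<Rightarrow> real
   \<Rightarrow> nat \<Rightarrow> nat \<Rightarrow> real" where
  "opt_tolls m a b fs \<mu> P i j = (if fs i j > 0 then \<mu> - latency m a b fs i else P)"

end

theory Submission
  imports Defs
begin

text \<open>Under these tolls every type pays exactly \<open>\<mu>\<close> on the roads it uses in \<open>f\<^sup>*\<close> and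
  more than \<open>P\<close> elsewhere, so \<open>f\<^sup>*\<close> is an equilibrium and, once \<open>P\<close> exceeds \<open>\<mu>\<close> plus a
  bound on all feasible latencies, no equilibrium \<open>f\<close> uses an edge outside \<open>G(f\<^sup>*)\<close>. The
  deviation \<open>x = f - f\<^sup>*\<close> is then supported on \<open>G(f\<^sup>*)\<close>, sums to zero for every type, and,
  since type \<open>j\<close> pays \<open>\<mu> + D\<^sub>i\<close> on road \<open>i\<close> with \<open>D\<^sub>i = \<Sum>\<^sub>j a\<^sub>i\<^sup>j x\<^sub>i\<^sup>j\<close> the latency change,
  a type can only gain flow on a road whose \<open>D\<close> is at most that of every road where it
  loses flow. Starting from a road with \<open>x \<noteq> 0\<close> and \<open>D \<ge> 0\<close>, follow a type with positive
  deviation to a road where it has negative deviation; that road again has \<open>D \<ge> 0\<close>, hence a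
  type with positive deviation. This walk never backtracks, so it closes a cycle in the
  finite forest \<open>G(f\<^sup>*)\<close>. The same argument for \<open>-x\<close> excludes \<open>D < 0\<close>, so \<open>x = 0\<close>.\<close>

lemma nonbacktracking_walk_has_cycle:
  fixes v :: "nat \<Rightarrow> 'a"
  assumes finite: "finite (range v)"
    and walk: "\<And>k. E (v k) (v (Suc k))"
    and irrefl: "\<And>x. \<not> E x x"
    and no_backtrack: "\<And>k. v (Suc (Suc k)) \<noteq> v k"
  shows "\<exists>vs. 3 \<le> length vs \<and> distinct vs \<and>
           (\<forall>k. Suc k < length vs \<longrightarrow> E (vs ! k) (vs ! Suc k)) \<and> E (last vs) (hd vs)"
proof -
  let ?repeats = "\<lambda>q. \<exists>p<q. v p = v q"
  have "\<not> inj v"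
    using finite finite_imageD infinite_UNIV_nat by blast
  then obtain p q where "p \<noteq> q" "v p = v q"
    unfolding inj_def by blast
  then have "\<exists>q. ?repeats q"
    by (metis linorder_neqE_nat)
  define q0 where "q0 = (LEAST q. ?repeats q)"
  obtain p0 where p0: "p0 < q0" "v p0 = v q0"
    using LeastI_ex[OF \<open>\<exists>q. ?repeats q\<close>] unfolding q0_def by blast
  have "inj_on v {p0..<q0}"
  proof (rule inj_onI, rule ccontr)
    fix p q assume "p \<in> {p0..<q0}" "q \<in> {p0..<q0}" "v p = v q" "p \<noteq> q"
    then have "?repeats (max p q)"
      by (intro exI[of _ "min p q"]) (auto simp: min_def max_def)
    then have "q0 \<le> max p q"
      unfolding q0_def by (rule Least_le)
    then show False
      using \<open>p \<in> {p0..<q0}\<close> \<open>q \<in> {p0..<q0}\<close> by (simp add: max_def split: if_splits)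
  qed
  have "q0 \<noteq> Suc p0"
    using p0(2) walk[of p0] irrefl by metis
  moreover have "q0 \<noteq> Suc (Suc p0)"
    using p0(2) no_backtrack[of p0] by metis
  ultimately have "3 \<le> q0 - p0"
    using p0(1) by linarith
  moreover have "E (v (q0 - 1)) (v p0)"
    using walk[of "q0 - 1"] p0 by simp
  ultimately show ?thesis
    using \<open>inj_on v {p0..<q0}\<close> p0(1) walk
    by (intro exI[of _ "map v [p0..<q0]"]) (auto simp: distinct_map hd_map last_map)
qed

lemma support_edge_irrefl: "\<not> support_edge n m f u u"
  unfolding support_edge_def by auto

lemma support_acyclic_no_alternating_walk:
  assumes acyclic: "support_acyclic n m f"
    and roads: "\<And>k. I k < n" and types: "\<And>k. J k < m"
    and edge_in: "\<And>k. f (I k) (J k) > 0" and edge_out: "\<And>k. f (I (Suc k)) (J k) > 0"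
    and new_road: "\<And>k. I (Suc k) \<noteq> I k" and new_type: "\<And>k. J (Suc k) \<noteq> J k"
  shows False
proof -
  define v where "v k = (if even k then Inl (I (k div 2)) else Inr (J (k div 2)))" for k
  have v_even: "v (2 * t) = Inl (I t)" and v_odd: "v (Suc (2 * t)) = Inr (J t)" for t
    by (simp_all add: v_def)
  have parity: "\<exists>t. k = 2 * t \<or> k = Suc (2 * t)" for k :: nat
    by presburger
  have "range v \<subseteq> Inl ` {..<n} \<union> Inr ` {..<m}"
    using roads types by (auto simp: v_def)
  then have "finite (range v)"
    by (rule finite_subset) simp
  moreover have "support_edge n m f (v k) (v (Suc k))" for k
  proof -
    obtain t where "k = 2 * t \<or> k = Suc (2 * t)"
      using parity by blast
    then show ?thesis
    proof
      assume "k = 2 * t"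
      then show ?thesis
        using roads types edge_in by (auto simp: v_even v_odd support_edge_def)
    next
      assume "k = Suc (2 * t)"
      then have "v k = Inr (J t)" "v (Suc k) = Inl (I (Suc t))"
        using v_odd v_even[of "Suc t"] by simp_all
      then show ?thesis
        using roads types edge_out by (auto simp: support_edge_def)
    qed
  qed
  moreover have "v (Suc (Suc k)) \<noteq> v k" for k
  proof -
    obtain t where "k = 2 * t \<or> k = Suc (2 * t)"
      using parity by blast
    then show ?thesis
      using v_even[of "Suc t"] v_even[of t] v_odd[of "Suc t"] v_odd[of t]
        new_road[of t] new_type[of t]
      by auto
  qed
  ultimately show False
    using nonbacktracking_walk_has_cycle[of v "support_edge n m f"] support_edge_irrefl acyclic
    unfolding support_acyclic_def by blast
qed

lemma weighted_sum_nonneg_imp_pos_term: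
  fixes w x :: "'a \<Rightarrow> real"
  assumes "finite A" and w_pos: "\<And>j. j \<in> A \<Longrightarrow> 0 < w j"
    and sum_nonneg: "0 \<le> (\<Sum>j\<in>A. w j * x j)" and "j0 \<in> A" "x j0 \<noteq> 0"
  shows "\<exists>j\<in>A. 0 < x j"
proof (rule ccontr)
  assume "\<not> (\<exists>j\<in>A. 0 < x j)"
  then have "\<forall>j\<in>A. w j * x j \<le> 0" and "w j0 * x j0 < 0"
    using w_pos \<open>j0 \<in> A\<close> \<open>x j0 \<noteq> 0\<close> by (auto simp: mult_pos_neg mult_nonneg_nonpos less_le)
  then have "(\<Sum>j\<in>A. w j * x j) < (\<Sum>j\<in>A. 0)"
    using \<open>finite A\<close> \<open>j0 \<in> A\<close> by (intro sum_strict_mono_ex1) auto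
  then show False
    using sum_nonneg by simp
qed

lemma forest_deviation_latency_change_neg:
  fixes x :: "nat \<Rightarrow> nat \<Rightarrow> real"
  assumes acyclic: "support_acyclic n m fs"
    and a_pos: "\<And>i j. i < n \<Longrightarrow> j < m \<Longrightarrow> 0 < a i j"
    and supported: "\<And>i j. i < n \<Longrightarrow> j < m \<Longrightarrow> x i j \<noteq> 0 \<Longrightarrow> 0 < fs i j"
    and balanced: "\<And>j. j < m \<Longrightarrow> (\<Sum>i<n. x i j) = 0"
    and monotone: "\<And>i i' j. i < n \<Longrightarrow> i' < n \<Longrightarrow> j < m \<Longrightarrow> 0 < x i j \<Longrightarrow> x i' j < 0 \<Longrightarrow>
       (\<Sum>k<m. a i k * x i k) \<le> (\<Sum>k<m. a i' k * x i' k)"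
    and i0: "i0 < n" "j0 < m" "x i0 j0 \<noteq> 0"
  shows "(\<Sum>k<m. a i0 k * x i0 k) < 0"
proof (rule ccontr)
  define D where "D i = (\<Sum>k<m. a i k * x i k)" for i
  have pos_deviation_if_nonneg_change: "\<exists>j<m. 0 < x i j" if "i < n" "0 \<le> D i" "j < m" "x i j \<noteq> 0" for i j
    using weighted_sum_nonneg_imp_pos_term[of "{..<m}" "a i" "x i" j] a_pos that
    unfolding D_def by auto
  assume "\<not> D i0 < 0"
  then have "0 \<le> D i0"
    by simp
  define T where "T = {(i, j). i < n \<and> j < m \<and> 0 < x i j \<and> 0 \<le> D i}"
  obtain j1 where "(i0, j1) \<in> T"
    using pos_deviation_if_nonneg_change[of i0 j0] i0 \<open>0 \<le> D i0\<close> unfolding D_def T_def by force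
  moreover have "\<exists>q \<in> T. x (fst q) (snd p) < 0" if "p \<in> T" for p
  proof -
    obtain i j where p: "p = (i, j)" "i < n" "j < m" "0 < x i j" "0 \<le> D i"
      using \<open>p \<in> T\<close> unfolding T_def by blast
    obtain i' where i': "i' < n" "0 < - x i' j"
      using weighted_sum_nonneg_imp_pos_term[of "{..<n}" "\<lambda>_. 1" "\<lambda>i. - x i j" i] p balanced
      by (auto simp: sum_negf)
    have "0 \<le> D i'"
      using monotone[of i i' j] p i' unfolding D_def by force
    then obtain j' where "j' < m" "0 < x i' j'"
      using pos_deviation_if_nonneg_change[of i' j] i' p by force
    then show ?thesis
      using i' \<open>0 \<le> D i'\<close> p unfolding T_def by force
  qed
  ultimately obtain p where p: "\<And>k. p k \<in> T" "\<And>k. x (fst (p (Suc k))) (snd (p k)) < 0"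
    using dependent_nat_choice[of "\<lambda>_ q. q \<in> T" "\<lambda>_ q q'. x (fst q') (snd q) < 0"] by metis
  define I J where "I k = fst (p k)" and "J k = snd (p k)" for k
  have walk: "I k < n" "J k < m" "0 < x (I k) (J k)" "x (I (Suc k)) (J k) < 0" for k
    using p[of k] unfolding I_def J_def T_def by auto
  show False
  proof (rule support_acyclic_no_alternating_walk[OF acyclic, of I J])
    fix k
    show "I k < n" "J k < m" "0 < fs (I k) (J k)" "0 < fs (I (Suc k)) (J k)"
      using walk[of k] walk[of "Suc k"] supported by force+
    show "I (Suc k) \<noteq> I k" "J (Suc k) \<noteq> J k"
      using walk[of k] walk[of "Suc k"] by force+
  qed
qed

lemma forest_deviation_vanishes:
  fixes x :: "nat \<Rightarrow> nat \<Rightarrow> real"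
  assumes acyclic: "support_acyclic n m fs"
    and a_pos: "\<And>i j. i < n \<Longrightarrow> j < m \<Longrightarrow> 0 < a i j"
    and supported: "\<And>i j. i < n \<Longrightarrow> j < m \<Longrightarrow> x i j \<noteq> 0 \<Longrightarrow> 0 < fs i j"
    and balanced: "\<And>j. j < m \<Longrightarrow> (\<Sum>i<n. x i j) = 0"
    and monotone: "\<And>i i' j. i < n \<Longrightarrow> i' < n \<Longrightarrow> j < m \<Longrightarrow> 0 < x i j \<Longrightarrow> x i' j < 0 \<Longrightarrow>
       (\<Sum>k<m. a i k * x i k) \<le> (\<Sum>k<m. a i' k * x i' k)"
    and "i < n" "j < m"
  shows "x i j = 0"
proof (rule ccontr)
  assume "x i j \<noteq> 0"
  have "(\<Sum>k<m. a i k * x i k) < 0"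
    using acyclic a_pos supported balanced monotone \<open>i < n\<close> \<open>j < m\<close> \<open>x i j \<noteq> 0\<close>
    by (rule forest_deviation_latency_change_neg)
  moreover have "(\<Sum>k<m. a i k * - x i k) < 0"
  proof (rule forest_deviation_latency_change_neg[OF acyclic a_pos])
    show "(\<Sum>i<n. - x i j) = 0" if "j < m" for j
      using balanced[OF that] by (simp add: sum_negf)
    show "(\<Sum>k<m. a i k * - x i k) \<le> (\<Sum>k<m. a i' k * - x i' k)"
      if "i < n" "i' < n" "j < m" "0 < - x i j" "- x i' j < 0" for i i' j
      using monotone[of i' i j] that by (simp add: sum_negf)
  qed (use supported \<open>i < n\<close> \<open>j < m\<close> \<open>x i j \<noteq> 0\<close> in auto)
  ultimately show False
    by (simp add: sum_negf)
qed

lemma feasible_le_demand: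
  assumes "feasible n m d f" "i < n" "j < m"
  shows "f i j \<le> d j"
proof -
  have "f i j \<le> (\<Sum>i'<n. f i' j)"
    using assms by (intro member_le_sum) (auto simp: feasible_def)
  then show ?thesis
    using assms by (simp add: feasible_def)
qed

lemma latency_cong:
  assumes "\<And>j. j < m \<Longrightarrow> f i j = g i j"
  shows "latency m a b f i = latency m a b g i"
  using assms by (simp add: latency_def)

lemma is_equilibrium_cong:
  assumes "\<And>i j. i < n \<Longrightarrow> j < m \<Longrightarrow> f i j = g i j"
  shows "is_equilibrium n m a b d tau f \<longleftrightarrow> is_equilibrium n m a b d tau g"
proof -
  have "feasible n m d f \<longleftrightarrow> feasible n m d g"
    using assms by (simp add: feasible_def)
  moreover have "latency m a b f i = latency m a b g i" if "i < n" for i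
    using assms that by (intro latency_cong)
  ultimately show ?thesis
    using assms unfolding is_equilibrium_def by auto
qed

lemma equilibrium_cost_le:
  assumes "is_equilibrium n m a b d tau f" "j < m" "i < n" "0 < f i j" "i' < n"
  shows "latency m a b f i + tau i j \<le> latency m a b f i' + tau i' j"
  using assms unfolding is_equilibrium_def by blast

lemma latency_diff:
  "latency m a b f i - latency m a b g i = (\<Sum>j<m. a i j * (f i j - g i j))"
  by (simp add: latency_def sum_subtractf algebra_simps)

locale affine_network =
  fixes n m :: nat and a :: "nat \<Rightarrow> nat \<Rightarrow> real" and b d :: "nat \<Rightarrow> real"
  assumes b_nonneg: "\<And>i. i < n \<Longrightarrow> 0 \<le> b i"
    and a_pos: "\<And>i j. i < n \<Longrightarrow> j < m \<Longrightarrow> 0 < a i j"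
    and d_nonneg: "\<And>j. j < m \<Longrightarrow> 0 \<le> d j"
begin

definition latency_bound :: real where
  "latency_bound = (\<Sum>i<n. latency m a b (\<lambda>_ j. d j) i)"

lemma latency_nonneg:
  assumes "i < n" "\<And>j. j < m \<Longrightarrow> 0 \<le> f i j"
  shows "0 \<le> latency m a b f i"
  unfolding latency_def
  using assms b_nonneg a_pos
  by (intro add_nonneg_nonneg sum_nonneg mult_nonneg_nonneg) (auto simp: less_imp_le)

lemma feasible_latency_nonneg:
  "feasible n m d f \<Longrightarrow> i < n \<Longrightarrow> 0 \<le> latency m a b f i"
  by (rule latency_nonneg) (auto simp: feasible_def)

lemma latency_bound_nonneg: "0 \<le> latency_bound"
  unfolding latency_bound_def using d_nonneg by (intro sum_nonneg latency_nonneg) auto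

lemma feasible_latency_le_bound:
  assumes "feasible n m d f" "i < n"
  shows "latency m a b f i \<le> latency_bound"
proof -
  have "latency m a b f i \<le> latency m a b (\<lambda>_ j. d j) i"
    unfolding latency_def using assms a_pos feasible_le_demand
    by (intro add_left_mono sum_mono mult_left_mono) (auto simp: less_imp_le)
  also have "\<dots> \<le> latency_bound"
    unfolding latency_bound_def using assms(2) d_nonneg
    by (intro member_le_sum latency_nonneg) auto
  finally show ?thesis .
qed

lemma opt_tolls_equilibrium_self:
  assumes "feasible n m d fs" "\<mu> \<le> P"
  shows "is_equilibrium n m a b d (opt_tolls m a b fs \<mu> P) fs"
  unfolding is_equilibrium_def
proof (intro conjI assms allI impI)
  fix j i i' assume "j < m" "i < n" "0 < fs i j" "i' < n"
  then show "latency m a b fs i + opt_tolls m a b fs \<mu> P i j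
      \<le> latency m a b fs i' + opt_tolls m a b fs \<mu> P i' j"
    using assms feasible_latency_nonneg[of fs i'] by (simp add: opt_tolls_def)
qed

context
  fixes fs f :: "nat \<Rightarrow> nat \<Rightarrow> real" and \<mu> P :: real
  assumes fs_feasible: "feasible n m d fs"
    and P_large: "\<mu> + latency_bound < P"
    and equilibrium: "is_equilibrium n m a b d (opt_tolls m a b fs \<mu> P) f"
begin

lemma opt_tolls_equilibrium_feasible: "feasible n m d f"
  using equilibrium by (simp add: is_equilibrium_def)

lemma opt_tolls_equilibrium_support:
  assumes "i < n" "j < m" "0 < f i j"
  shows "0 < fs i j"
proof (rule ccontr)
  assume "\<not> 0 < fs i j"
  have "0 < d j"
    using feasible_le_demand[OF opt_tolls_equilibrium_feasible assms(1,2)] assms(3) by linarith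
  then have "0 < (\<Sum>i'<n. fs i' j)"
    using fs_feasible assms(2) by (simp add: feasible_def)
  then obtain i' where "i' < n" "0 < fs i' j"
    by (metis lessThan_iff not_le sum_nonpos)
  then have "latency m a b f i + P \<le> latency m a b f i' + (\<mu> - latency m a b fs i')"
    using equilibrium_cost_le[OF equilibrium \<open>j < m\<close> \<open>i < n\<close> \<open>0 < f i j\<close> \<open>i' < n\<close>]
      \<open>\<not> 0 < fs i j\<close> by (simp add: opt_tolls_def)
  then show False
    using feasible_latency_nonneg[OF opt_tolls_equilibrium_feasible \<open>i < n\<close>]
      feasible_latency_nonneg[OF fs_feasible \<open>i' < n\<close>]
      feasible_latency_le_bound[OF opt_tolls_equilibrium_feasible \<open>i' < n\<close>] P_large
    by linarith
qed

lemma opt_tolls_equilibrium_latency_change_mono: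
  assumes "j < m" "i < n" "0 < f i j" "i' < n" "0 < fs i' j"
  shows "latency m a b f i - latency m a b fs i \<le> latency m a b f i' - latency m a b fs i'"
  using equilibrium_cost_le[OF equilibrium assms(1-4)] assms(5)
    opt_tolls_equilibrium_support[OF assms(2,1,3)]
  by (simp add: opt_tolls_def)

lemma opt_tolls_equilibrium_unique:
  assumes "support_acyclic n m fs" "i < n" "j < m"
  shows "f i j = fs i j"
proof -
  have "f i j - fs i j = 0"
  proof (rule forest_deviation_vanishes[OF assms(1) a_pos])
    show "0 < fs i j" if "i < n" "j < m" "f i j - fs i j \<noteq> 0" for i j
    proof -
      have "0 \<le> f i j" "0 \<le> fs i j"
        using opt_tolls_equilibrium_feasible fs_feasible that by (simp_all add: feasible_def)
      then show ?thesis
        using opt_tolls_equilibrium_support[of i j] that by force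
    qed
    show "(\<Sum>i<n. f i j - fs i j) = 0" if "j < m" for j
      using opt_tolls_equilibrium_feasible fs_feasible that by (simp add: feasible_def sum_subtractf)
    show "(\<Sum>k<m. a i k * (f i k - fs i k)) \<le> (\<Sum>k<m. a i' k * (f i' k - fs i' k))"
      if "i < n" "i' < n" "j < m" "0 < f i j - fs i j" "f i' j - fs i' j < 0" for i i' j
    proof -
      have "0 < f i j" "0 < fs i' j"
        using opt_tolls_equilibrium_feasible fs_feasible that by (force simp: feasible_def)+
      then show ?thesis
        using opt_tolls_equilibrium_latency_change_mono[of j i i'] that
          latency_diff[of m a b f i fs] latency_diff[of m a b f i' fs] by linarith
    qed
  qed (use assms in auto)
  then show ?thesis
    by simp
qed

end

end

theorem theorem2:
  fixes n m :: nat
    and a :: "nat \<Rightarrow> nat \<Rightarrow> real" and b :: "nat \<Rightarrow> real" and d :: "nat \<Rightarrow> real"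
    and fs :: "nat \<Rightarrow> nat \<Rightarrow> real" and \<mu> :: real
  assumes b_nonneg: "\<forall>i<n. b i \<ge> 0"
    and a_pos: "\<forall>i<n. \<forall>j<m. a i j > 0"
    and d_nonneg: "\<forall>j<m. d j \<ge> 0"
    and fs_feasible: "feasible n m d fs"
    and fs_opt: "\<forall>g. feasible n m d g \<longrightarrow> social_cost n m a b fs \<le> social_cost n m a b g"
    and fs_acyclic: "support_acyclic n m fs"
  shows "\<exists>P0. \<forall>P\<ge>P0. \<forall>f.
           is_equilibrium n m a b d (opt_tolls m a b fs \<mu> P) f
             \<longleftrightarrow> (\<forall>i<n. \<forall>j<m. f i j = fs i j)"
proof -
  interpret affine_network n m a b d
    using b_nonneg a_pos d_nonneg by unfold_locales auto
  show ?thesis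
  proof (intro exI[of _ "\<mu> + latency_bound + 1"] allI impI)
    fix P f
    assume "\<mu> + latency_bound + 1 \<le> P"
    then have P_large: "\<mu> + latency_bound < P" and "\<mu> \<le> P"
      using latency_bound_nonneg by linarith+
    show "is_equilibrium n m a b d (opt_tolls m a b fs \<mu> P) f \<longleftrightarrow> (\<forall>i<n. \<forall>j<m. f i j = fs i j)"
    proof
      assume "is_equilibrium n m a b d (opt_tolls m a b fs \<mu> P) f"
      then show "\<forall>i<n. \<forall>j<m. f i j = fs i j"
        using opt_tolls_equilibrium_unique[OF fs_feasible P_large _ fs_acyclic] by blast
    next
      assume "\<forall>i<n. \<forall>j<m. f i j = fs i j"
      then show "is_equilibrium n m a b d (opt_tolls m a b fs \<mu> P) f"
        using is_equilibrium_cong[of n m f fs] opt_tolls_equilibrium_self[OF fs_feasible \<open>\<mu> \<le> P\<close>]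
        by simp
    qed
  qed
qed

end
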